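(* Let $k$ be a positive integer. The polynomial $P_k(1,\beta,0)\in\mathbb Q[\beta]$ has degree $\le\left\lfloor\frac{k^2}4\right\rfloor$.
   Context: Define $\widetilde c_n\in\mathbb Q[\beta]$ by $\widetilde c_0=2$, $\widetilde c_1=1$, $(n+1)\widetilde c_{n+1}=\widetilde c_n+\frac\beta4(n-1)\widetilde c_{n-1}$ for $n\ge1$, and $\widetilde c_n=0$ for $n<0$. $P_k(1,\beta,0)$ is the $k\times k$ determinant with $(j,l)$ entry $\widetilde c_{k-2(j-1)+(l-1)}$, $1\le j,l\le k$. *)

theory Defs
  imports "HOL-Computational_Algebra.Polynomial" "Jordan_Normal_Form.Determinant"
begin

(* c~_n for n >= 0, as polynomials in beta over Q:
   c~_0 = 2, c~_1 = 1, (n+1) c~_{n+1} = c~_n + (beta/4)(n-1) c~_{n-1} for n >= 1.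
   Written with n+1 in place of n: c~_{n+2} = (c~_{n+1} + (beta/4) n c~_n) / (n+2). *)
fun ctilde_nat :: "nat \<Rightarrow> rat poly" where
  "ctilde_nat 0 = [:2:]"
| "ctilde_nat (Suc 0) = [:1:]"
| "ctilde_nat (Suc (Suc n)) =
     smult (1 / of_nat (n + 2)) (ctilde_nat (Suc n) + smult (of_nat n / 4) [:0, 1:] * ctilde_nat n)"

definition ctilde :: "int \<Rightarrow> rat poly" where
  "ctilde i = (if i < 0 then 0 else ctilde_nat (nat i))"

(* P_k(1,beta,0): k x k determinant with (j,l) entry c~_{k-2(j-1)+(l-1)}, 1 <= j,l <= k;
   here with 0-based indices i = j-1, m = l-1 *)
definition P_k :: "nat \<Rightarrow> rat poly" where
  "P_k k = det (mat k k (\<lambda>(i, m). ctilde (int k - 2 * int i + int m)))"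

end

theory Submission
  imports Defs
begin

text \<open>Since \<open>c~\<^sub>n\<close> has degree at most \<open>\<lfloor>n/2\<rfloor>\<close>, the term of the Leibniz expansion
  of \<open>P\<^sub>k\<close> belonging to a permutation \<open>p\<close> is either zero or has degree at most
  \<open>\<Sum>\<^sub>i \<lfloor>(k + p(i) - 2i)/2\<rfloor> = \<Sum>\<^sub>i (\<lfloor>(k + p(i))/2\<rfloor> - i)\<close>. As \<open>p\<close> permutes the
  column indices, this sum does not depend on \<open>p\<close>; for \<open>p = id\<close> it is
  \<open>\<Sum>\<^sub>m<\<^sub>k \<lfloor>(k - m)/2\<rfloor> = \<lfloor>k\<^sup>2/4\<rfloor>\<close>.\<close>

lemma degree_ctilde_nat_le: "degree (ctilde_nat n) \<le> n div 2"
proof (induction n rule: ctilde_nat.induct)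
  case (3 n)
  have "degree (smult (of_nat n / 4) [:0, 1:] * ctilde_nat n) \<le> 1 + degree (ctilde_nat n)"
    using degree_mult_le[of "smult (of_nat n / 4) [:0, 1::rat:]" "ctilde_nat n"]
    by (simp add: degree_smult_le)
  with "3.IH" have "degree (ctilde_nat (Suc n) + smult (of_nat n / 4) [:0, 1:] * ctilde_nat n)
      \<le> Suc (Suc n) div 2"
    by (intro degree_add_le) auto
  then show ?case
    by (simp add: order_trans[OF degree_smult_le])
qed simp_all

lemma ctilde_neg: "i < 0 \<Longrightarrow> ctilde i = 0"
  by (simp add: ctilde_def)

lemma degree_ctilde_le: "degree (ctilde i) \<le> nat i div 2"
  using degree_ctilde_nat_le[of "nat i"] by (simp add: ctilde_def)

lemma degree_det_le:
  fixes A :: "'a :: comm_ring_1 poly mat"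
  assumes "A \<in> carrier_mat n n"
    and "\<And>p. p permutes {0..<n} \<Longrightarrow> degree (\<Prod>i = 0..<n. A $$ (i, p i)) \<le> D"
  shows "degree (det A) \<le> D"
proof -
  have "degree (signof p * (\<Prod>i = 0..<n. A $$ (i, p i))) \<le> D" if "p permutes {0..<n}" for p
    using degree_mult_le[of "signof p" "\<Prod>i = 0..<n. A $$ (i, p i)"] assms(2)[OF that]
    by (simp add: sign_def)
  then show ?thesis
    using assms(1) unfolding det_def
    by (auto intro!: degree_sum_le simp: finite_permutations)
qed

lemma sum_Suc_div_2: "(\<Sum>m<k. Suc m div 2) = k\<^sup>2 div 4"
proof (induction k)
  case (Suc k)
  have "k\<^sup>2 div 4 + Suc k div 2 = (Suc k)\<^sup>2 div 4"
    by (cases "even k") (auto elim!: evenE oddE simp: power2_eq_square algebra_simps)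
  with Suc show ?case by simp
qed simp

lemma sum_permutes_div_2:
  fixes p :: "nat \<Rightarrow> nat"
  assumes p: "p permutes {..<k}" and below: "\<And>i. i < k \<Longrightarrow> 2 * i \<le> k + p i"
  shows "(\<Sum>i<k. (k + p i - 2 * i) div 2) = k\<^sup>2 div 4"
proof -
  have "(k + p i - 2 * i) div 2 + i = (k + p i) div 2" if "i < k" for i
    using below[OF that] by linarith
  then have "(\<Sum>i<k. (k + p i - 2 * i) div 2) + (\<Sum>i<k. i) = (\<Sum>i<k. (k + p i) div 2)"
    unfolding sum.distrib[symmetric] by (intro sum.cong) auto
  also have "\<dots> = (\<Sum>m<k. (k + m) div 2)"
    using sum.permute[OF p, of "\<lambda>m. (k + m) div 2"] by (simp add: comp_def)
  also have "\<dots> = (\<Sum>m<k. (k - m) div 2) + (\<Sum>m<k. m)"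
    unfolding sum.distrib[symmetric] by (rule sum.cong) auto
  also have "(\<Sum>m<k. (k - m) div 2) = (\<Sum>m<k. Suc m div 2)"
    using sum.nat_diff_reindex[of "\<lambda>m. Suc m div 2" k]
    by (metis (no_types, lifting) Suc_diff_Suc lessThan_iff sum.cong)
  finally show ?thesis
    by (simp add: sum_Suc_div_2)
qed

lemma degree_prod_ctilde_le:
  assumes p: "p permutes {..<k}"
  shows "degree (\<Prod>i<k. ctilde (int k - 2 * int i + int (p i))) \<le> k\<^sup>2 div 4"
proof (cases "\<forall>i<k. 2 * i \<le> k + p i")
  case True
  have entry: "degree (ctilde (int k - 2 * int i + int (p i))) \<le> (k + p i - 2 * i) div 2"
    if "i < k" for i
  proof -
    have "int k - 2 * int i + int (p i) = int (k + p i - 2 * i)"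
      using True that by (simp add: of_nat_diff)
    then show ?thesis
      using degree_ctilde_le[of "int (k + p i - 2 * i)"] by simp
  qed
  have "degree (\<Prod>i<k. ctilde (int k - 2 * int i + int (p i)))
      \<le> (\<Sum>i<k. degree (ctilde (int k - 2 * int i + int (p i))))"
    using degree_prod_sum_le[of "{..<k}" "\<lambda>i. ctilde (int k - 2 * int i + int (p i))"]
    by (simp add: comp_def)
  also have "\<dots> \<le> (\<Sum>i<k. (k + p i - 2 * i) div 2)"
    using entry by (intro sum_mono) simp
  also have "\<dots> = k\<^sup>2 div 4"
    using sum_permutes_div_2[OF p] True by simp
  finally show ?thesis .
next
  case False
  then obtain i where "i < k" "k + p i < 2 * i"
    by auto
  then have "(\<Prod>i<k. ctilde (int k - 2 * int i + int (p i))) = 0"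
    by (intro prod_zero) (auto intro!: bexI[of _ i] ctilde_neg)
  then show ?thesis
    by (metis degree_0 le0)
qed

theorem lemma4p7:
  fixes k :: nat
  assumes "k > 0"
  shows "degree (P_k k) \<le> k ^ 2 div 4"
proof -
  define A where "A = mat k k (\<lambda>(i, m). ctilde (int k - 2 * int i + int m))"
  have "A \<in> carrier_mat k k"
    by (simp add: A_def)
  moreover have "degree (\<Prod>i = 0..<k. A $$ (i, p i)) \<le> k\<^sup>2 div 4" if p: "p permutes {0..<k}" for p
  proof -
    have "(\<Prod>i = 0..<k. A $$ (i, p i)) = (\<Prod>i<k. ctilde (int k - 2 * int i + int (p i)))"
      unfolding atLeast0LessThan using permutes_in_image[OF p]
      by (intro prod.cong) (auto simp: A_def)
    moreover have "p permutes {..<k}"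
      using p by (simp add: atLeast0LessThan)
    ultimately show ?thesis
      using degree_prod_ctilde_le by metis
  qed
  ultimately show ?thesis
    unfolding P_k_def A_def[symmetric] by (rule degree_det_le)
qed

end
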